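(* For every base $b\ge 2$ there exist infinitely many (distinct) arithmetic progressions of length $b$ all of whose terms are $b$-wARH numbers.
   Context: Fix a base $b\ge 2$. $s_b(N)$ is the sum of the base-$b$ digits of $N$. For a positive integer $X$, its reversal $X^R$ is the integer whose base-$b$ representation is that of $X$ written in reverse order (leading zeros of the result are dropped). A positive integer $N$ is a $b$-wARH number if there exists an integer $A\ge 0$ such that $N=(A+s_b(N))+(A+s_b(N))^R$. *)

theory Defs
  imports Main
begin

text \<open>Base-b digits, least significant first (no leading zeros; empty list for 0).\<close>
fun digits :: "nat \<Rightarrow> nat \<Rightarrow> nat list" where
  "digits b n = (if b < 2 \<or> n = 0 then [] else n mod b # digits b (n div b))"

declare digits.simps [simp del]

fun from_digits :: "nat \<Rightarrow> nat list \<Rightarrow> nat" where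
  "from_digits b [] = 0"
| "from_digits b (d # ds) = d + b * from_digits b ds"

definition digit_sum :: "nat \<Rightarrow> nat \<Rightarrow> nat" where
  "digit_sum b n = sum_list (digits b n)"

text \<open>Reversal of the base-b representation; leading zeros of the result vanish automatically.\<close>
definition reversal :: "nat \<Rightarrow> nat \<Rightarrow> nat" where
  "reversal b n = from_digits b (rev (digits b n))"

definition wARH :: "nat \<Rightarrow> nat \<Rightarrow> bool" where
  "wARH b N \<longleftrightarrow> N > 0 \<and>
     (\<exists>A::nat. N = (A + digit_sum b N) + reversal b (A + digit_sum b N))"

end

theory Submission
  imports Defs
begin

text \<open>For k \<ge> 2 and 1 \<le> s \<le> b, the number N = s (b^k + 1) has digit sum
  2 s_b(s) \<le> 2b \<le> b^k, and it equals X + X^R for X = y + b^k x, where s = x + y with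
  0 < x < b and 0 \<le> y < b. Since X \<ge> b^k, the choice A = X - s_b(N) shows that N is wARH.
  Hence a = d = b^k + 1 gives the progression d, 2d, ..., bd of wARH numbers for every k \<ge> 2.\<close>

lemma digits_step:
  assumes "b \<ge> 2" "d < b" "n > 0"
  shows "digits b (d + b * n) = d # digits b n"
  using assms by (subst digits.simps) simp

lemma digits_single:
  assumes "b \<ge> 2" "0 < x" "x < b"
  shows "digits b x = [x]"
  using assms by (subst digits.simps) (simp add: digits.simps[of b 0])

lemma digits_mult_power:
  assumes "b \<ge> 2" "0 < x" "x < b"
  shows "digits b (x * b ^ j) = replicate j 0 @ [x]"
proof (induction j)
  case 0
  show ?case using digits_single[OF assms] by simp
next
  case (Suc j)
  have "digits b (0 + b * (x * b ^ j)) = 0 # digits b (x * b ^ j)"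
    using assms by (intro digits_step) auto
  then show ?case using Suc by (simp add: mult.left_commute)
qed

lemma from_digits_replicate_zero_append:
  "from_digits b (replicate j 0 @ ds) = b ^ j * from_digits b ds"
  by (induction j) auto

lemma digit_sum_step:
  assumes "b \<ge> 2" "d < b"
  shows "digit_sum b (d + b * n) = d + digit_sum b n"
proof (cases "n = 0")
  case True
  then show ?thesis
    using assms by (cases "d = 0") (simp_all add: digit_sum_def digits_single digits.simps[of b 0])
next
  case False
  then show ?thesis using digits_step[OF assms] by (simp add: digit_sum_def)
qed

lemma digit_sum_add_mult_power:
  assumes "b \<ge> 2" "x < b ^ k"
  shows "digit_sum b (x + b ^ k * y) = digit_sum b x + digit_sum b y"
  using assms(2)
proof (induction k arbitrary: x)
  case 0
  then show ?case by (simp add: digit_sum_def digits.simps)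
next
  case (Suc k)
  have "x div b < b ^ k" using Suc.prems by (intro less_mult_imp_div_less) (simp add: mult.commute)
  have x: "x = x mod b + b * (x div b)" by simp
  have "x + b ^ Suc k * y = x mod b + b * (x div b + b ^ k * y)"
    by (subst x) (simp add: algebra_simps)
  then have "digit_sum b (x + b ^ Suc k * y) = x mod b + digit_sum b (x div b + b ^ k * y)"
    using assms(1) by (simp add: digit_sum_step)
  also have "\<dots> = x mod b + digit_sum b (x div b) + digit_sum b y"
    using Suc.IH[OF \<open>x div b < b ^ k\<close>] by simp
  also have "x mod b + digit_sum b (x div b) = digit_sum b x"
    using digit_sum_step[OF assms(1), of "x mod b" "x div b"] assms(1) by simp
  finally show ?case .
qed

lemma digit_sum_le: "digit_sum b n \<le> n"
proof (induction n rule: less_induct)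
  case (less n)
  show ?case
  proof (cases "b < 2 \<or> n = 0")
    case True
    then show ?thesis by (simp add: digit_sum_def digits.simps)
  next
    case False
    then have "digit_sum b n = n mod b + digit_sum b (n div b)"
      by (simp add: digit_sum_def digits.simps[of b n])
    moreover have "digit_sum b (n div b) \<le> n div b" using False less by simp
    moreover have "n div b \<le> b * (n div b)" using False by simp
    ultimately show ?thesis using mod_mult_div_eq[of n b] by linarith
  qed
qed

lemma reversal_two_digits_apart:
  assumes "b \<ge> 2" "y < b" "0 < x" "x < b"
  shows "reversal b (y + b ^ Suc j * x) = x + b ^ Suc j * y"
proof -
  have "digits b (y + b * (x * b ^ j)) = y # replicate j 0 @ [x]"
    using assms by (subst digits_step) (auto simp: digits_mult_power)
  then show ?thesis
    by (simp add: reversal_def from_digits_replicate_zero_append mult.left_commute mult.commute)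
qed

lemma wARH_if_reversal_sum:
  assumes "0 < N" "N = X + reversal b X" "digit_sum b N \<le> X"
  shows "wARH b N"
  unfolding wARH_def using assms by (intro conjI exI[of _ "X - digit_sum b N"]) simp_all

lemma wARH_mult_power_plus_one:
  assumes b: "b \<ge> 2" and k: "k \<ge> 2" and s: "1 \<le> s" "s \<le> b"
  shows "wARH b (s * (b ^ k + 1))"
proof -
  obtain j where j: "k = Suc j" using k by (cases k) auto
  have "b ^ 2 \<le> b ^ k" using b k by (intro power_increasing) auto
  moreover have "2 * b \<le> b ^ 2" using b by (simp add: power2_eq_square)
  ultimately have twice_b: "2 * b \<le> b ^ k" by linarith
  define y where "y = (if s = b then 1 else 0 :: nat)"
  define x where "x = s - y"
  have y: "y < b" and x: "0 < x" "x < b" and s_eq: "s = x + y"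
    using b s by (auto simp: y_def x_def)
  define X where "X = y + b ^ k * x"
  have sum: "s * (b ^ k + 1) = X + reversal b X"
    unfolding X_def j reversal_two_digits_apart[OF b y x] s_eq by (simp add: algebra_simps)
  have "digit_sum b (s * (b ^ k + 1)) = digit_sum b (s + b ^ k * s)"
    by (simp add: algebra_simps)
  also have "\<dots> = 2 * digit_sum b s"
    using twice_b s by (subst digit_sum_add_mult_power) (use b in auto)
  also have "\<dots> \<le> b ^ k" using digit_sum_le[of b s] s twice_b by linarith
  also have "b ^ k \<le> X" using x by (simp add: X_def trans_le_add2)
  finally show ?thesis using s by (intro wARH_if_reversal_sum[OF _ sum]) simp_all
qed

theorem corollary7:
  fixes b :: nat
  assumes "b \<ge> 2"
  shows "infinite {(a::nat, d::nat). d > 0 \<and> (\<forall>i<b. wARH b (a + i * d))}"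
proof -
  define d where "d j = b ^ (j + 2) + 1" for j
  have progression: "(d j, d j) \<in> {(a, d). d > 0 \<and> (\<forall>i<b. wARH b (a + i * d))}" for j
  proof -
    have "wARH b (d j + i * d j)" if "i < b" for i
      using wARH_mult_power_plus_one[OF assms, of "j + 2" "Suc i"] that
      by (simp only: d_def mult_Suc)
    then show ?thesis by (simp add: d_def)
  qed
  have "strict_mono d" unfolding d_def using assms by (intro strict_monoI) simp
  then have "inj (\<lambda>j. (d j, d j))" by (simp add: inj_def strict_mono_eq)
  then have "infinite (range (\<lambda>j. (d j, d j)))"
    using finite_imageD infinite_UNIV_nat by blast
  moreover have "range (\<lambda>j. (d j, d j)) \<subseteq> {(a, d). d > 0 \<and> (\<forall>i<b. wARH b (a + i * d))}"
    using progression by blast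
  ultimately show ?thesis using infinite_super by blast
qed

end
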